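(* Let $0<q\leq 1$, let $A\in\mathbb{R}^{m\times n}$, let $D\in\mathbb{R}^{n\times d}$ be a frame with frame bounds $0<\mathcal{L}\leq\mathcal{U}<\infty$, fix positive integers $s<a$, and set $\rho=s/a$, $\kappa=\mathcal{U}/\mathcal{L}$. Assume that the $(D^{\dagger},q)$-RIP constants of $A$ satisfy $$\rho^{1-q/2}\left(\rho^{2/q-1}+1\right)^{q/2}\kappa^q(1+\delta_a)<1-\delta_{s+a}.$$ Let $f\in\mathbb{R}^n$ and $y=Af$. Then any solution $\hat{f}$ of $$\min_{\tilde{f}\in\mathbb{R}^n}\|D^*\tilde{f}\|_q\quad\text{subject to}\quad A\tilde{f}=y$$ satisfies $$\|\hat{f}-f\|_2\leq C_1\frac{\|D^*f-(D^*f)_{[s]}\|_q}{s^{1/q-1/2}},$$ where $C_1$ is a positive constant depending only on $\delta_a$, $\delta_{s+a}$, $\rho$, $q$, $\mathcal{L}$ and $\kappa$.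
   Context: $D\in\mathbb{R}^{n\times d}$ is a frame with frame bounds $0<\mathcal{L}\leq\mathcal{U}<\infty$ if $\mathcal{L}\|f\|_2^2\leq\|D^*f\|_2^2\leq\mathcal{U}\|f\|_2^2$ for all $f\in\mathbb{R}^n$. $D^{\dagger}=(DD^* )^{-1}D$. For a matrix $E\in\mathbb{R}^{n\times d}$, $A$ obeys the $(E,q)$-RIP of order $k$ with constant $\delta\in[0,1)$ if $(1-\delta)\|Ev\|_2^q\leq\|AEv\|_q^q\leq(1+\delta)\|Ev\|_2^q$ for all $v\in\mathbb{R}^d$ with at most $k$ nonzero entries; $\delta_k$ denotes the smallest such $\delta$. $x_{[s]}$ keeps the $s$ largest entries of $x$ in magnitude and zeros the rest. *)

theory Defs
  imports "Jordan_Normal_Form.Gauss_Jordan_Elimination"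
begin

definition l2_norm :: "real vec \<Rightarrow> real" where
  "l2_norm v = sqrt (\<Sum>i<dim_vec v. (v $ i)^2)"

definition lq_norm :: "real \<Rightarrow> real vec \<Rightarrow> real" where
  "lq_norm q v = (\<Sum>i<dim_vec v. \<bar>v $ i\<bar> powr q) powr (1 / q)"

definition supp_card :: "real vec \<Rightarrow> nat" where
  "supp_card v = card {i. i < dim_vec v \<and> v $ i \<noteq> 0}"

definition is_frame :: "real mat \<Rightarrow> real \<Rightarrow> real \<Rightarrow> bool" where
  "is_frame D L U \<longleftrightarrow> 0 < L \<and> L \<le> U \<and>
     (\<forall>f \<in> carrier_vec (dim_row D).
        L * (l2_norm f)^2 \<le> (l2_norm (D\<^sup>T *\<^sub>v f))^2 \<and>
        (l2_norm (D\<^sup>T *\<^sub>v f))^2 \<le> U * (l2_norm f)^2)"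

definition dagger :: "real mat \<Rightarrow> real mat" where
  "dagger D = the (mat_inverse (D * D\<^sup>T)) * D"

definition has_rip :: "real mat \<Rightarrow> real \<Rightarrow> real mat \<Rightarrow> nat \<Rightarrow> real \<Rightarrow> bool" where
  "has_rip E q A k \<delta> \<longleftrightarrow> 0 \<le> \<delta> \<and> \<delta> < 1 \<and>
     (\<forall>v \<in> carrier_vec (dim_col E). supp_card v \<le> k \<longrightarrow>
        (1 - \<delta>) * (l2_norm (E *\<^sub>v v)) powr q \<le> (lq_norm q (A *\<^sub>v (E *\<^sub>v v))) powr q \<and>
        (lq_norm q (A *\<^sub>v (E *\<^sub>v v))) powr q \<le> (1 + \<delta>) * (l2_norm (E *\<^sub>v v)) powr q)"

definition rip_const :: "real mat \<Rightarrow> real \<Rightarrow> real mat \<Rightarrow> nat \<Rightarrow> real" where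
  "rip_const E q A k = Inf {\<delta>. has_rip E q A k \<delta>}"

definition is_best_s_term :: "real vec \<Rightarrow> nat \<Rightarrow> real vec \<Rightarrow> bool" where
  "is_best_s_term x s y \<longleftrightarrow> dim_vec y = dim_vec x \<and>
     (\<exists>T. T \<subseteq> {..<dim_vec x} \<and> card T = min s (dim_vec x) \<and>
          (\<forall>i\<in>T. \<forall>j<dim_vec x. j \<notin> T \<longrightarrow> \<bar>x $ j\<bar> \<le> \<bar>x $ i\<bar>) \<and>
          (\<forall>i<dim_vec x. y $ i = (if i \<in> T then x $ i else 0)))"

definition is_lq_minimizer :: "real \<Rightarrow> real mat \<Rightarrow> real mat \<Rightarrow> real vec \<Rightarrow> real vec \<Rightarrow> bool" where
  "is_lq_minimizer q A D y fhat \<longleftrightarrow> fhat \<in> carrier_vec (dim_col A) \<and> A *\<^sub>v fhat = y \<and>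
     (\<forall>g \<in> carrier_vec (dim_col A). A *\<^sub>v g = y \<longrightarrow>
        lq_norm q (D\<^sup>T *\<^sub>v fhat) \<le> lq_norm q (D\<^sup>T *\<^sub>v g))"

end

theory Submission
  imports Defs "HOL-Analysis.Convex" "Jordan_Normal_Form.Determinant"
begin

text \<open>
  Let \<open>h = fhat - f\<close> and \<open>x = D\<^sup>T h\<close>. Since \<open>A h = 0\<close> and \<open>dagger D\<close> inverts \<open>D\<^sup>T\<close> from the
  left, \<open>x\<close> lies in the kernel of \<open>A (dagger D)\<close>. Let \<open>T\<^sub>0\<close> carry the \<open>s\<close> largest entries of
  \<open>D\<^sup>T f\<close>, sort the other entries of \<open>x\<close> by decreasing magnitude and cut them into blocks of size
  \<open>a\<close>; the first block joins \<open>T\<^sub>0\<close> to form \<open>T\<close>. Minimality of \<open>fhat\<close> bounds the \<open>q\<close>-mass of \<open>x\<close>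
  off \<open>T\<^sub>0\<close> by its mass on \<open>T\<^sub>0\<close> plus twice the best \<open>s\<close>-term error, and since every entry of a
  block is dominated by the \<open>q\<close>-mean of the previous block, the sum \<open>S\<close> of the \<open>q\<close>-th powers of the
  tail blocks is at most \<open>(s/a)\<^bsup>1-q/2\<^esup> \<parallel>x\<^sub>T\<parallel>\<^sup>q + \<tau>\<close>. The RIP of order \<open>s + a\<close> on \<open>x\<^sub>T\<close> and
  of order \<open>a\<close> on the tail blocks, together with the frame bounds, give
  \<open>\<parallel>x\<^sub>T\<parallel>\<^bsup>2q\<^esup> \<le> \<theta> S \<parallel>x\<parallel>\<^sup>q\<close>. In terms of \<open>e = \<parallel>x\<^sub>T\<parallel>\<^sup>q\<close>, the tail \<open>r\<close> and \<open>n = \<parallel>x\<parallel>\<^sup>q\<close> these are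
  scalar inequalities which, by Minkowski's inequality in \<open>\<ell>\<^bsub>2/q\<^esub>\<close>, force \<open>n \<le> C \<tau>\<close> as soon as
  the RIP condition holds; the lower frame bound turns \<open>\<parallel>x\<parallel>\<close> into \<open>\<parallel>h\<parallel>\<close>.
\<close>

section \<open>Elementary inequalities for powers\<close>

lemma powr_add_le_add_powr:
  fixes a b p :: real
  assumes "0 \<le> a" "0 \<le> b" "0 < p" "p \<le> 1"
  shows "(a + b) powr p \<le> a powr p + b powr p"
proof (cases "a + b = 0")
  case True
  then show ?thesis using assms by simp
next
  case False
  define s where "s = a + b"
  have s: "0 < s" using False assms s_def by auto
  have frac: "z / s \<le> (z / s) powr p" if "0 \<le> z" "z \<le> s" for z
    using powr_mono'[of p 1 "z / s"] that assms s by simp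
  have "1 = a / s + b / s" using s s_def by (simp add: add_divide_distrib[symmetric])
  also have "\<dots> \<le> (a / s) powr p + (b / s) powr p"
    using frac[of a] frac[of b] assms s_def by (intro add_mono) auto
  also have "\<dots> = (a powr p + b powr p) / s powr p"
    using assms s by (simp add: powr_divide add_divide_distrib)
  finally show ?thesis using s by (simp add: le_divide_eq s_def)
qed

lemma powr_sum_le_sum_powr:
  fixes g :: "'a \<Rightarrow> real"
  assumes "\<And>i. i \<in> I \<Longrightarrow> 0 \<le> g i" "0 < p" "p \<le> 1"
  shows "(\<Sum>i\<in>I. g i) powr p \<le> (\<Sum>i\<in>I. g i powr p)"
  using assms
proof (induction I rule: infinite_finite_induct)
  case (insert x F)
  have "(\<Sum>i\<in>insert x F. g i) powr p \<le> g x powr p + (\<Sum>i\<in>F. g i) powr p"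
    using insert by (simp add: powr_add_le_add_powr sum_nonneg)
  also have "\<dots> \<le> (\<Sum>i\<in>insert x F. g i powr p)"
    using insert by simp
  finally show ?case .
qed simp_all

lemma abs_add_powr_le:
  fixes a b q :: real
  assumes "0 < q" "q \<le> 1"
  shows "\<bar>a + b\<bar> powr q \<le> \<bar>a\<bar> powr q + \<bar>b\<bar> powr q"
proof -
  have "\<bar>a + b\<bar> powr q \<le> (\<bar>a\<bar> + \<bar>b\<bar>) powr q"
    using assms abs_triangle_ineq by (intro powr_mono2) auto
  also have "\<dots> \<le> \<bar>a\<bar> powr q + \<bar>b\<bar> powr q"
    using assms by (intro powr_add_le_add_powr) auto
  finally show ?thesis .
qed

lemma sum_powr_cone_constraint:
  fixes z x :: "'a \<Rightarrow> real"
  assumes fin: "finite T" "finite C" and disj: "T \<inter> C = {}" and q: "0 < q" "q \<le> 1"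
    and min: "(\<Sum>k\<in>T \<union> C. \<bar>z k + x k\<bar> powr q) \<le> (\<Sum>k\<in>T \<union> C. \<bar>z k\<bar> powr q)"
  shows "(\<Sum>k\<in>C. \<bar>x k\<bar> powr q) \<le> (\<Sum>k\<in>T. \<bar>x k\<bar> powr q) + 2 * (\<Sum>k\<in>C. \<bar>z k\<bar> powr q)"
proof -
  have on_C: "(\<Sum>k\<in>C. \<bar>x k\<bar> powr q) \<le> (\<Sum>k\<in>C. \<bar>z k + x k\<bar> powr q) + (\<Sum>k\<in>C. \<bar>z k\<bar> powr q)"
    using abs_add_powr_le[OF q, of "z k + x k" "- z k" for k]
    by (simp add: sum.distrib[symmetric] sum_mono)
  have on_T: "(\<Sum>k\<in>T. \<bar>z k\<bar> powr q) \<le> (\<Sum>k\<in>T. \<bar>z k + x k\<bar> powr q) + (\<Sum>k\<in>T. \<bar>x k\<bar> powr q)"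
    using abs_add_powr_le[OF q, of "z k + x k" "- x k" for k]
    by (simp add: sum.distrib[symmetric] sum_mono)
  show ?thesis using min on_C on_T by (simp add: sum.union_disjoint[OF fin disj])
qed

lemma sum_powr_le_card_powr_sum:
  fixes g :: "'a \<Rightarrow> real"
  assumes "finite T" "\<And>i. i \<in> T \<Longrightarrow> 0 \<le> g i" "0 < p" "p \<le> 1"
  shows "(\<Sum>i\<in>T. g i powr p) \<le> real (card T) powr (1 - p) * (\<Sum>i\<in>T. g i) powr p"
proof (cases "(\<Sum>i\<in>T. g i) = 0")
  case True
  then have "\<forall>i\<in>T. g i = 0" using sum_nonneg_eq_0_iff assms by blast
  then show ?thesis by simp
next
  case False
  then have card: "0 < card T" using assms card_gt_0_iff by fastforce
  have sum_pos: "0 < (\<Sum>i\<in>T. g i)" using False assms sum_nonneg by (metis order_le_less)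
  define c where "c = (\<Sum>i\<in>T. g i) / real (card T)"
  have c: "0 < c" using sum_pos card c_def by simp
  \<comment> \<open>Young's inequality against the mean \<open>c\<close>: \<open>(g/c)\<^sup>p \<le> p (g/c) + (1 - p)\<close>.\<close>
  have young: "(g i / c) powr p \<le> p * (g i / c) + (1 - p)" if "i \<in> T" for i
    using Youngs_inequality_0[of p "1 - p" "g i / c" 1] assms(2)[OF that] assms c
    by (cases "g i = 0") simp_all
  have "(\<Sum>i\<in>T. (g i / c) powr p) \<le> (\<Sum>i\<in>T. p * (g i / c) + (1 - p))"
    using young by (rule sum_mono)
  also have "\<dots> = p * ((\<Sum>i\<in>T. g i) / c) + (1 - p) * card T"
    by (simp add: sum.distrib sum_distrib_left sum_divide_distrib)
  also have "\<dots> = card T"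
    using card sum_pos by (simp add: c_def algebra_simps)
  finally have "(\<Sum>i\<in>T. g i powr p) \<le> card T * c powr p"
    using assms c by (simp add: powr_divide sum_divide_distrib[symmetric] divide_le_eq mult.commute)
  also have "\<dots> = real (card T) powr (1 - p) * (\<Sum>i\<in>T. g i) powr p"
    using card sum_pos unfolding c_def by (simp add: powr_divide powr_diff field_simps)
  finally show ?thesis .
qed

lemma sq_powr_half:
  fixes t q :: real
  shows "(t\<^sup>2) powr (q/2) = \<bar>t\<bar> powr q"
proof -
  have "t\<^sup>2 = \<bar>t\<bar> powr 2" by (simp add: powr_numeral)
  then have "(t\<^sup>2) powr (q/2) = \<bar>t\<bar> powr (2 * (q/2))" by (simp only: powr_powr)
  then show ?thesis by simp
qed

lemma powr_powr_two_div:
  fixes t q :: real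
  assumes "0 \<le> t" "0 < q"
  shows "(t powr q) powr (2/q) = t\<^sup>2"
  using assms by (simp add: powr_powr powr_numeral)

lemma powr_diff_mult_powr_diff:
  fixes a s u v :: real
  assumes "0 < a" "0 \<le> s"
  shows "a powr (u - v) * s powr (v - u) = (s / a) powr (v - u)"
proof -
  have "a powr (u - v) = 1 / a powr (v - u)"
    using powr_minus_divide[of a "v - u"] by simp
  then show ?thesis using assms by (simp add: powr_divide)
qed

lemma powr_convex_combination_le:
  fixes x y t p :: real
  assumes "0 \<le> x" "0 \<le> y" "0 \<le> t" "t \<le> 1" "1 \<le> p"
  shows "((1 - t) * x + t * y) powr p \<le> (1 - t) * x powr p + t * y powr p"
proof -
  have scale: "(c * z) powr p \<le> c * z powr p" if "0 \<le> c" "c \<le> 1" "0 \<le> z" for c z :: real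
  proof -
    have "c powr p \<le> c powr 1"
      using that assms(5) powr_mono'[of 1 p c] by (cases "c = 0") auto
    then show ?thesis using that by (simp add: powr_mult mult_right_mono)
  qed
  consider "x = 0" | "y = 0" | "0 < x" "0 < y" using assms by linarith
  then show ?thesis
  proof cases
    case 1 then show ?thesis using scale[of t y] assms by simp
  next
    case 2 then show ?thesis using scale[of "1 - t" x] assms by simp
  next
    case 3
    then show ?thesis
      using convex_onD[OF powr_convex[OF assms(5)], of t x y] assms by simp
  qed
qed

lemma powr_minkowski_pair:
  fixes u v w p :: real
  assumes "1 \<le> p" "0 \<le> u" "0 \<le> v" "0 \<le> w"
  shows "(u powr p + (v + w) powr p) powr (1 / p) \<le> (u powr p + v powr p) powr (1 / p) + w"
proof -
  define S where "S = (u powr p + v powr p) powr (1 / p)"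
  have p: "0 < p" using assms by simp
  have S0: "0 \<le> S" unfolding S_def by simp
  have S_pow: "S powr p = u powr p + v powr p"
    unfolding S_def using p by (simp add: powr_powr add_nonneg_nonneg)
  consider "S = 0" | "w = 0" | "0 < S" "0 < w" using S0 assms by linarith
  then show ?thesis
  proof cases
    case 1
    then have "u = 0" "v = 0" using S_pow assms by (auto simp: add_nonneg_eq_0_iff)
    then show ?thesis using 1 assms p unfolding S_def by (simp add: powr_powr)
  next
    case 2 then show ?thesis unfolding S_def by simp
  next
    case 3
    \<comment> \<open>with \<open>t = w / (S + w)\<close>, \<open>u\<close> and \<open>v + w\<close> are \<open>t\<close>-combinations of \<open>(S + w) / S \<cdot> (u, v)\<close> and
      \<open>(0, S + w)\<close>, so convexity of \<open>t\<^sup>p\<close> bounds \<open>u\<^sup>p + (v + w)\<^sup>p\<close> by \<open>(S + w)\<^sup>p\<close>\<close>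
    define c where "c = S + w"
    define t where "t = w / c"
    have c: "0 < c" unfolding c_def using 3 by simp
    have t: "0 \<le> t" "t \<le> 1" unfolding t_def c_def using 3 by auto
    have one_t: "1 - t = S / c" unfolding t_def c_def using 3 by (simp add: field_simps)
    have rescale: "(1 - t) * (z * c / S) = z" for z
      unfolding one_t using 3 c by simp
    have tc: "t * c = w" unfolding t_def using c by simp
    have split: "z = (1 - t) * (z * c / S) + t * 0" "z + w = (1 - t) * (z * c / S) + t * c"
      for z unfolding rescale tc by simp_all
    define k where "k = (S / c) * (c / S) powr p"
    have bound_u: "u powr p \<le> k * u powr p"
    proof -
      have "u powr p \<le> (1 - t) * (u * c / S) powr p + t * 0 powr p"
        using powr_convex_combination_le[of "u * c / S" 0 t p] split(1)[of u] t c 3 assms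
        by simp
      then show ?thesis using assms c 3 by (simp add: k_def one_t powr_mult powr_divide mult_ac)
    qed
    have bound_vw: "(v + w) powr p \<le> k * v powr p + t * c powr p"
      using powr_convex_combination_le[of "v * c / S" c t p] split(2)[of v] t c 3 assms
      by (simp add: k_def one_t powr_mult powr_divide mult_ac)
    have "u powr p + (v + w) powr p \<le> k * S powr p + t * c powr p"
      using bound_u bound_vw unfolding S_pow by (simp add: algebra_simps)
    also have "\<dots> = (S / c + w / c) * c powr p"
      using 3 by (simp add: k_def t_def powr_divide algebra_simps)
    also have "\<dots> = c powr p"
      using c by (simp add: c_def add_divide_distrib[symmetric])
    finally have "(u powr p + (v + w) powr p) powr (1 / p) \<le> (c powr p) powr (1 / p)"
      using p by (intro powr_mono2) auto
    then show ?thesis using c p unfolding c_def S_def by (simp add: powr_powr)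
  qed
qed

lemma le_sqrt_of_quadratic_le:
  fixes u A B :: real
  assumes "0 \<le> A" "0 \<le> B" "u\<^sup>2 \<le> A * u + B"
  shows "u \<le> A + sqrt B"
proof (rule ccontr)
  assume "\<not> ?thesis"
  then have gt: "A + sqrt B < u" by simp
  have sqrt_B: "0 \<le> sqrt B" using assms by simp
  then have u: "0 < u" using gt assms by linarith
  have "u * (A + sqrt B) < u * u" using gt u by (rule mult_strict_left_mono)
  moreover have "sqrt B * sqrt B \<le> sqrt B * u" using gt assms sqrt_B by (intro mult_left_mono) auto
  moreover have "sqrt B * sqrt B = B" using assms by simp
  ultimately show False using assms(3) by (simp add: power2_eq_square algebra_simps)
qed

(* Minkowski gives n \<le> c e + \<tau> with c = (1 + \<rho>\<^sup>p)\<^bsup>1/p\<^esup>; put into e\<^sup>2 \<le> \<theta> (\<rho> e + \<tau>) n this is a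
   quadratic inequality for e with root bound K \<tau>, whence n \<le> (c K + 1) \<tau>. *)
definition recovery_factor :: "real \<Rightarrow> real \<Rightarrow> real \<Rightarrow> real" where
  "recovery_factor p \<theta> \<rho> =
    (let c = (1 + \<rho> powr p) powr (1 / p); \<gamma> = \<theta> * \<rho> * c
     in c * (\<theta> * (\<rho> + c) / (1 - \<gamma>) + sqrt (\<theta> / (1 - \<gamma>))) + 1)"

lemma scalar_recovery_bound:
  fixes p \<theta> \<rho> e r n \<tau> :: real
  assumes p: "1 \<le> p" and \<theta>: "0 \<le> \<theta>" and \<rho>: "0 \<le> \<rho>"
    and gain: "\<theta> * \<rho> * (1 + \<rho> powr p) powr (1 / p) < 1"
    and nonneg: "0 \<le> e" "0 \<le> r" "0 \<le> n" "0 \<le> \<tau>"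
    and head: "e\<^sup>2 \<le> \<theta> * (\<rho> * e + \<tau>) * n"
    and tail: "r \<le> \<rho> * e + \<tau>"
    and split: "n powr p \<le> e powr p + r powr p"
  shows "n \<le> recovery_factor p \<theta> \<rho> * \<tau>"
proof -
  define c where "c = (1 + \<rho> powr p) powr (1 / p)"
  define \<gamma> where "\<gamma> = \<theta> * \<rho> * c"
  define K where "K = \<theta> * (\<rho> + c) / (1 - \<gamma>) + sqrt (\<theta> / (1 - \<gamma>))"
  have c: "0 \<le> c" unfolding c_def by simp
  have \<gamma>: "\<gamma> < 1" using gain unfolding \<gamma>_def c_def .
  have n_le: "n \<le> c * e + \<tau>"
  proof -
    have "n = (n powr p) powr (1 / p)" using nonneg p by (simp add: powr_powr)
    also have "\<dots> \<le> (e powr p + r powr p) powr (1 / p)"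
      using split nonneg p by (intro powr_mono2) auto
    also have "\<dots> \<le> (e powr p + (\<rho> * e + \<tau>) powr p) powr (1 / p)"
      using tail nonneg p by (intro powr_mono2 add_left_mono) auto
    also have "\<dots> \<le> (e powr p + (\<rho> * e) powr p) powr (1 / p) + \<tau>"
      using nonneg \<rho> p by (intro powr_minkowski_pair) auto
    also have "(e powr p + (\<rho> * e) powr p) powr (1 / p) = ((1 + \<rho> powr p) * e powr p) powr (1 / p)"
      using nonneg \<rho> by (simp add: powr_mult algebra_simps)
    also have "\<dots> = c * e"
      using nonneg \<rho> p by (simp add: c_def powr_mult powr_powr)
    finally show ?thesis .
  qed
  have "e\<^sup>2 \<le> \<theta> * (\<rho> * e + \<tau>) * (c * e + \<tau>)"
    using head n_le \<theta> \<rho> nonneg by (intro order.trans[OF head] mult_left_mono) auto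
  then have "(1 - \<gamma>) * e\<^sup>2 \<le> \<theta> * (\<rho> + c) * \<tau> * e + \<theta> * \<tau>\<^sup>2"
    unfolding \<gamma>_def by (simp add: algebra_simps power2_eq_square)
  then have "e\<^sup>2 \<le> (\<theta> * (\<rho> + c) * \<tau> * e + \<theta> * \<tau>\<^sup>2) / (1 - \<gamma>)"
    using \<gamma> by (simp add: pos_le_divide_eq mult.commute)
  then have "e\<^sup>2 \<le> (\<theta> * (\<rho> + c) * \<tau> / (1 - \<gamma>)) * e + \<theta> * \<tau>\<^sup>2 / (1 - \<gamma>)"
    by (simp add: add_divide_distrib)
  then have "e \<le> \<theta> * (\<rho> + c) * \<tau> / (1 - \<gamma>) + sqrt (\<theta> * \<tau>\<^sup>2 / (1 - \<gamma>))"
    using \<gamma> \<theta> \<rho> c nonneg by (intro le_sqrt_of_quadratic_le) auto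
  also have "\<dots> = K * \<tau>"
    using nonneg \<gamma> by (simp add: K_def real_sqrt_mult real_sqrt_divide algebra_simps)
  finally have "c * e \<le> c * (K * \<tau>)" using c by (rule mult_left_mono)
  then show ?thesis
    using n_le unfolding recovery_factor_def Let_def c_def[symmetric] \<gamma>_def[symmetric] K_def[symmetric]
    by (simp add: algebra_simps)
qed

lemma recovery_factor_ge_one:
  assumes "0 \<le> \<theta>" "0 \<le> \<rho>" "\<theta> * \<rho> * (1 + \<rho> powr p) powr (1 / p) < 1"
  shows "1 \<le> recovery_factor p \<theta> \<rho>"
  using assms unfolding recovery_factor_def Let_def by (simp add: add_nonneg_nonneg)

(* The hypothesis of the paper carries \<kappa>\<^sup>q; the argument only uses \<kappa>\<^bsup>q/2\<^esup> \<le> \<kappa>\<^sup>q. *)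
lemma recovery_gain_lt_one:
  fixes q \<rho> \<kappa> \<delta>a \<delta>sa :: real
  assumes q: "0 < q" and \<rho>: "0 \<le> \<rho>" and \<kappa>: "1 \<le> \<kappa>" and \<delta>: "0 \<le> \<delta>a" "\<delta>sa < 1"
    and cond: "\<rho> powr (1 - q/2) * (\<rho> powr (2/q - 1) + 1) powr (q/2) * \<kappa> powr q * (1 + \<delta>a) < 1 - \<delta>sa"
  shows "\<kappa> powr (q/2) * (1 + \<delta>a) / (1 - \<delta>sa) * \<rho> powr (1 - q/2)
           * (1 + (\<rho> powr (1 - q/2)) powr (2/q)) powr (q/2) < 1"
proof -
  define c where "c = (1 + \<rho> powr (2/q - 1)) powr (q/2)"
  have "(\<rho> powr (1 - q/2)) powr (2/q) = \<rho> powr (2/q - 1)"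
    using q by (simp add: powr_powr algebra_simps)
  then have "\<kappa> powr (q/2) * (1 + \<delta>a) / (1 - \<delta>sa) * \<rho> powr (1 - q/2)
             * (1 + (\<rho> powr (1 - q/2)) powr (2/q)) powr (q/2)
           = \<kappa> powr (q/2) * ((1 + \<delta>a) * \<rho> powr (1 - q/2) * c) / (1 - \<delta>sa)"
    by (simp add: c_def)
  also have "\<dots> \<le> \<kappa> powr q * ((1 + \<delta>a) * \<rho> powr (1 - q/2) * c) / (1 - \<delta>sa)"
    using \<kappa> \<delta> q by (intro divide_right_mono mult_right_mono powr_mono) (auto simp: c_def)
  also have "\<dots> < 1"
    using cond \<delta> by (simp add: c_def add.commute mult_ac)
  finally show ?thesis .
qed

section \<open>Cutting a decreasing rearrangement into blocks\<close>

lemma block_l2_powr_le_prev_block: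
  fixes y :: "nat \<Rightarrow> real"
  assumes a: "0 < a" and q: "0 < q" "q \<le> 1" and y: "\<And>k. 0 \<le> y k" "antimono y"
  shows "(\<Sum>k\<in>{(j+1)*a..<(j+1)*a+a}. (y k)\<^sup>2) powr (q/2)
         \<le> real a powr (q/2 - 1) * (\<Sum>k\<in>{j*a..<j*a+a}. y k powr q)"
proof -
  define P where "P = (\<Sum>k\<in>{j*a..<j*a+a}. y k powr q) / a"
  have P: "0 \<le> P" unfolding P_def by (simp add: sum_nonneg)
  \<comment> \<open>every entry of block \<open>j + 1\<close> is dominated by every entry of block \<open>j\<close>, hence by their \<open>q\<close>-mean\<close>
  have entry: "y k powr q \<le> P" if k: "k \<in> {(j+1)*a..<(j+1)*a+a}" for k
  proof -
    have "(\<Sum>k'\<in>{j*a..<j*a+a}. y k powr q) \<le> (\<Sum>k'\<in>{j*a..<j*a+a}. y k' powr q)"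
    proof (rule sum_mono)
      fix k' assume "k' \<in> {j*a..<j*a+a}"
      then have "k' \<le> k" using k by auto
      then show "y k powr q \<le> y k' powr q"
        using y q by (intro powr_mono2) (auto dest: antimonoD)
    qed
    then show ?thesis using a unfolding P_def by (simp add: field_simps)
  qed
  have "(\<Sum>k\<in>{(j+1)*a..<(j+1)*a+a}. (y k)\<^sup>2) \<le> (\<Sum>k\<in>{(j+1)*a..<(j+1)*a+a}. P powr (2/q))"
  proof (rule sum_mono)
    fix k assume "k \<in> {(j+1)*a..<(j+1)*a+a}"
    then have "(y k powr q) powr (2/q) \<le> P powr (2/q)"
      using entry y q by (intro powr_mono2) auto
    then show "(y k)\<^sup>2 \<le> P powr (2/q)"
      using y(1)[of k] q by (simp add: powr_powr powr_numeral)
  qed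
  then have "(\<Sum>k\<in>{(j+1)*a..<(j+1)*a+a}. (y k)\<^sup>2) powr (q/2) \<le> (real a * P powr (2/q)) powr (q/2)"
    using q by (intro powr_mono2) (auto intro: sum_nonneg)
  also have "\<dots> = real a powr (q/2) * P"
    using q P by (simp add: powr_mult powr_powr)
  also have "\<dots> = real a powr (q/2 - 1) * (\<Sum>k\<in>{j*a..<j*a+a}. y k powr q)"
    using a unfolding P_def by (simp add: powr_diff)
  finally show ?thesis .
qed

lemma decreasing_blocks_powr_bound:
  fixes y :: "nat \<Rightarrow> real"
  assumes "0 < a" "0 < q" "q \<le> 1" "\<And>k. 0 \<le> y k" "antimono y"
  shows "(\<Sum>j<J. (\<Sum>k\<in>{(j+1)*a..<(j+1)*a+a}. (y k)\<^sup>2) powr (q/2))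
         \<le> real a powr (q/2 - 1) * (\<Sum>k<J*a. y k powr q)"
proof -
  have "(\<Sum>j<J. (\<Sum>k\<in>{(j+1)*a..<(j+1)*a+a}. (y k)\<^sup>2) powr (q/2))
        \<le> (\<Sum>j<J. real a powr (q/2 - 1) * (\<Sum>k\<in>{j*a..<j*a+a}. y k powr q))"
    using assms by (intro sum_mono block_l2_powr_le_prev_block)
  also have "\<dots> = real a powr (q/2 - 1) * (\<Sum>k<J*a. y k powr q)"
    by (simp add: sum_distrib_left[symmetric] sum.nat_group)
  finally show ?thesis .
qed

lemma decreasing_enumeration:
  fixes w :: "'a::linorder \<Rightarrow> real"
  assumes "finite R"
  obtains e where "bij_betw e {..<card R} R"
    and "\<And>i j. i \<le> j \<Longrightarrow> j < card R \<Longrightarrow> w (e j) \<le> w (e i)"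
proof
  define l where "l = sort_key (\<lambda>i. - w i) (sorted_list_of_set R)"
  have l: "distinct l" "set l = R" "length l = card R"
    using assms distinct_card[of l] unfolding l_def by auto
  show "bij_betw ((!) l) {..<card R} R"
    using l by (simp add: bij_betw_nth lessThan_atLeast0)
  show "w (l ! j) \<le> w (l ! i)" if "i \<le> j" "j < card R" for i j
    using sorted_nth_mono[OF sorted_sort_key[of "\<lambda>i. - w i"], of i j] that l(3)
    unfolding l_def by simp
qed

lemma disjoint_nat_blocks:
  fixes a i j :: nat
  assumes "i \<noteq> j"
  shows "{i*a..<i*a+a} \<inter> {j*a..<j*a+a} = {}"
proof -
  have "p div a = m" if "p \<in> {m*a..<m*a+a}" for p m
    using that by (intro div_nat_eqI) (auto simp: algebra_simps)
  then show ?thesis using assms by blast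
qed

lemma lessThan_subset_nat_blocks:
  fixes a N :: nat
  assumes "0 < a"
  shows "{..<N} \<subseteq> {..<a} \<union> (\<Union>j<N div a. {(j+1)*a..<(j+1)*a+a})"
proof
  fix p assume p: "p \<in> {..<N}"
  have "p div a * a + p mod a = p" by (rule div_mult_mod_eq)
  then have block: "p \<in> {(p div a)*a..<(p div a)*a+a}"
    using mod_less_divisor[OF assms, of p] unfolding atLeastLessThan_iff by linarith
  show "p \<in> {..<a} \<union> (\<Union>j<N div a. {(j+1)*a..<(j+1)*a+a})"
  proof (cases "p < a")
    case False
    then have "0 < p div a" using assms by (simp add: div_greater_zero_iff)
    then obtain j where j: "p div a = j + 1" by (metis Suc_eq_plus1 gr0_conv_Suc)
    moreover have "p div a \<le> N div a" using p by (simp add: div_le_mono)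
    ultimately show ?thesis using block by auto
  qed simp
qed

lemma enumeration_blocks:
  fixes e :: "nat \<Rightarrow> 'a" and a N :: nat
  assumes e: "bij_betw e {..<N} R" and a: "0 < a"
  shows "e ` ({0..<a} \<inter> {..<N}) \<union> (\<Union>j<N div a. e ` ({(j+1)*a..<(j+1)*a+a} \<inter> {..<N})) = R"
    and "card (e ` ({i..<i+a} \<inter> {..<N})) \<le> a"
    and "i \<noteq> j \<Longrightarrow> e ` ({i*a..<i*a+a} \<inter> {..<N}) \<inter> e ` ({j*a..<j*a+a} \<inter> {..<N}) = {}"
proof -
  have inj: "inj_on e {..<N}" and R: "e ` {..<N} = R"
    using e by (auto simp: bij_betw_def)
  have "{..<N} = ({0..<a} \<inter> {..<N}) \<union> (\<Union>j<N div a. {(j+1)*a..<(j+1)*a+a} \<inter> {..<N})"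
    using lessThan_subset_nat_blocks[OF a, of N] unfolding atLeast0LessThan by blast
  then have "e ` {..<N} = e ` ({0..<a} \<inter> {..<N}) \<union> (\<Union>j<N div a. e ` ({(j+1)*a..<(j+1)*a+a} \<inter> {..<N}))"
    by (metis image_UN image_Un)
  then show "e ` ({0..<a} \<inter> {..<N}) \<union> (\<Union>j<N div a. e ` ({(j+1)*a..<(j+1)*a+a} \<inter> {..<N})) = R"
    using R by simp
  show "card (e ` ({i..<i+a} \<inter> {..<N})) \<le> a"
    by (rule order.trans[OF card_image_le]) (auto intro: card_mono order.trans)
  show "e ` ({i*a..<i*a+a} \<inter> {..<N}) \<inter> e ` ({j*a..<j*a+a} \<inter> {..<N}) = {}" if "i \<noteq> j"
  proof -
    have "e ` ({i*a..<i*a+a} \<inter> {..<N}) \<inter> e ` ({j*a..<j*a+a} \<inter> {..<N})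
          = e ` (({i*a..<i*a+a} \<inter> {..<N}) \<inter> ({j*a..<j*a+a} \<inter> {..<N}))"
      using inj by (intro inj_on_image_Int[symmetric]) auto
    then show ?thesis using disjoint_nat_blocks[OF that, of a] by blast
  qed
qed

lemma decreasing_block_partition:
  fixes w :: "nat \<Rightarrow> real"
  assumes R: "finite R" and a: "0 < a" and q: "0 < q" "q \<le> 1"
  obtains H :: "nat set" and J :: nat and B :: "nat \<Rightarrow> nat set"
  where "H \<subseteq> R" "card H \<le> a" "\<And>j. B j \<subseteq> R" "\<And>j. card (B j) \<le> a"
    "\<And>j. H \<inter> B j = {}" "\<And>i j. i \<noteq> j \<Longrightarrow> B i \<inter> B j = {}" "H \<union> (\<Union>j<J. B j) = R"
    "(\<Sum>j<J. (\<Sum>k\<in>B j. (w k)\<^sup>2) powr (q/2)) \<le> real a powr (q/2 - 1) * (\<Sum>k\<in>R. \<bar>w k\<bar> powr q)"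
proof -
  define N where "N = card R"
  obtain e where e: "bij_betw e {..<N} R"
    and e_mono: "\<And>i j. i \<le> j \<Longrightarrow> j < N \<Longrightarrow> \<bar>w (e j)\<bar> \<le> \<bar>w (e i)\<bar>"
    using decreasing_enumeration[OF R, of "\<lambda>k. \<bar>w k\<bar>"] unfolding N_def by blast
  define y where "y p = (if p < N then \<bar>w (e p)\<bar> else 0)" for p
  define blk where "blk i = e ` ({i*a..<i*a+a} \<inter> {..<N})" for i
  note blocks = enumeration_blocks[OF e a, folded blk_def]
  have y: "\<And>k. 0 \<le> y k" "antimono y"
    unfolding y_def by (auto intro!: antimonoI e_mono)
  have sum_blk: "(\<Sum>k\<in>e ` (P \<inter> {..<N}). g \<bar>w k\<bar>) = (\<Sum>p\<in>P. g (y p))"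
    if "finite P" "g 0 = 0" for P g
  proof -
    have "(\<Sum>k\<in>e ` (P \<inter> {..<N}). g \<bar>w k\<bar>) = (\<Sum>p\<in>P \<inter> {..<N}. g \<bar>w (e p)\<bar>)"
      using e by (subst sum.reindex) (auto simp: bij_betw_def intro: inj_on_subset)
    also have "\<dots> = (\<Sum>p\<in>P. g (y p))"
      using that by (simp add: sum.inter_restrict y_def if_distrib cong: if_cong)
    finally show ?thesis .
  qed
  show thesis
  proof
    show "blk 0 \<subseteq> R" "blk (j+1) \<subseteq> R" for j
      using e by (auto simp: blk_def bij_betw_def)
    show "card (blk 0) \<le> a" "card (blk (j+1)) \<le> a" for j
      using blocks(2)[of 0] blocks(2)[of "(j+1)*a"] by (simp_all add: blk_def)
    show "blk 0 \<inter> blk (j+1) = {}" for j using blocks(3) by simp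
    show "blk (i+1) \<inter> blk (j+1) = {}" if "i \<noteq> j" for i j using blocks(3) that by simp
    show "blk 0 \<union> (\<Union>j<N div a. blk (j+1)) = R" using blocks(1) by (simp add: blk_def)
    have "(\<Sum>j<N div a. (\<Sum>k\<in>blk (j+1). (w k)\<^sup>2) powr (q/2))
          = (\<Sum>j<N div a. (\<Sum>p\<in>{(j+1)*a..<(j+1)*a+a}. (y p)\<^sup>2) powr (q/2))"
      unfolding blk_def using sum_blk[of _ "\<lambda>t. t\<^sup>2"] by simp
    also have "\<dots> \<le> real a powr (q/2 - 1) * (\<Sum>p<N div a * a. y p powr q)"
      using a q y by (rule decreasing_blocks_powr_bound)
    also have "\<dots> \<le> real a powr (q/2 - 1) * (\<Sum>p<N. y p powr q)"
      using y by (intro mult_left_mono sum_mono2) auto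
    also have "(\<Sum>p<N. y p powr q) = (\<Sum>k\<in>R. \<bar>w k\<bar> powr q)"
      using sum_blk[of "{..<N}" "\<lambda>t. t powr q"] e by (simp add: bij_betw_def)
    finally show "(\<Sum>j<N div a. (\<Sum>k\<in>blk (j+1). (w k)\<^sup>2) powr (q/2))
        \<le> real a powr (q/2 - 1) * (\<Sum>k\<in>R. \<bar>w k\<bar> powr q)" .
  qed
qed

section \<open>Norms and restrictions of vectors\<close>

definition vec_restrict :: "nat set \<Rightarrow> 'a::zero vec \<Rightarrow> 'a vec" where
  "vec_restrict T x = vec (dim_vec x) (\<lambda>i. if i \<in> T then x $ i else 0)"

lemma dim_vec_restrict [simp]: "dim_vec (vec_restrict T x) = dim_vec x"
  unfolding vec_restrict_def by simp

lemma vec_restrict_carrier [simp]: "vec_restrict T x \<in> carrier_vec d \<longleftrightarrow> x \<in> carrier_vec d"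
  unfolding carrier_vec_def by simp

lemma index_vec_restrict [simp]:
  "i < dim_vec x \<Longrightarrow> vec_restrict T x $ i = (if i \<in> T then x $ i else 0)"
  unfolding vec_restrict_def by simp

lemma sum_restrict_lessThan:
  fixes g :: "nat \<Rightarrow> 'a::comm_monoid_add"
  assumes "T \<subseteq> {..<d}"
  shows "(\<Sum>k<d. if k \<in> T then g k else 0) = (\<Sum>k\<in>T. g k)"
  using assms by (simp add: sum.inter_restrict[symmetric] Int_absorb1)

lemma mult_mat_vec_restrict:
  fixes M :: "'a::comm_ring_1 mat"
  assumes "M \<in> carrier_mat m d" "x \<in> carrier_vec d" "T \<subseteq> {..<d}" "i < m"
  shows "(M *\<^sub>v vec_restrict T x) $ i = (\<Sum>k\<in>T. M $$ (i, k) * x $ k)"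
proof -
  have "(M *\<^sub>v vec_restrict T x) $ i = (\<Sum>k<d. if k \<in> T then M $$ (i, k) * x $ k else 0)"
    using assms by (auto simp: scalar_prod_def lessThan_atLeast0 intro!: sum.cong)
  then show ?thesis using assms(3) by (simp add: sum_restrict_lessThan)
qed

lemma supp_card_vec_restrict:
  assumes "finite T"
  shows "supp_card (vec_restrict T x) \<le> card T"
  unfolding supp_card_def using assms by (intro card_mono) (auto split: if_splits)

lemma l2_norm_nonneg: "0 \<le> l2_norm v"
  unfolding l2_norm_def by (simp add: sum_nonneg)

lemma l2_norm_sq: "(l2_norm v)\<^sup>2 = (\<Sum>i<dim_vec v. (v $ i)\<^sup>2)"
  unfolding l2_norm_def by (simp add: sum_nonneg)

lemma l2_norm_sq_scalar_prod: "(l2_norm v)\<^sup>2 = scalar_prod v v"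
  unfolding l2_norm_sq scalar_prod_def by (simp add: lessThan_atLeast0 power2_eq_square)

lemma l2_norm_eq_0_imp_zero:
  assumes "v \<in> carrier_vec n" "l2_norm v = 0"
  shows "v = 0\<^sub>v n"
proof -
  have "\<forall>i\<in>{..<n}. (v $ i)\<^sup>2 = 0"
    using assms l2_norm_sq[of v] by (subst sum_nonneg_eq_0_iff[symmetric]) auto
  then show ?thesis using assms by (intro eq_vecI) auto
qed

lemma l2_norm_vec_restrict_sq:
  assumes "T \<subseteq> {..<dim_vec x}"
  shows "(l2_norm (vec_restrict T x))\<^sup>2 = (\<Sum>k\<in>T. (x $ k)\<^sup>2)"
proof -
  have "(l2_norm (vec_restrict T x))\<^sup>2 = (\<Sum>k<dim_vec x. if k \<in> T then (x $ k)\<^sup>2 else 0)"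
    unfolding l2_norm_sq by (intro sum.cong) auto
  then show ?thesis using assms by (simp add: sum_restrict_lessThan)
qed

lemma l2_norm_vec_restrict_powr:
  assumes "T \<subseteq> {..<dim_vec x}"
  shows "l2_norm (vec_restrict T x) powr q = (\<Sum>k\<in>T. (x $ k)\<^sup>2) powr (q/2)"
  using sq_powr_half[of "l2_norm (vec_restrict T x)" q] l2_norm_nonneg
  by (simp add: l2_norm_vec_restrict_sq[OF assms])

lemma sum_abs_powr_le_l2_norm_vec_restrict:
  assumes T: "T0 \<subseteq> T" "T \<subseteq> {..<dim_vec x}" "card T0 \<le> s" and q: "0 < q" "q \<le> 1"
  shows "(\<Sum>k\<in>T0. \<bar>x $ k\<bar> powr q) \<le> real s powr (1 - q/2) * l2_norm (vec_restrict T x) powr q"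
proof -
  have fin: "finite T" using T(2) finite_subset by auto
  then have fin0: "finite T0" using T(1) finite_subset by auto
  have "(\<Sum>k\<in>T0. \<bar>x $ k\<bar> powr q) = (\<Sum>k\<in>T0. ((x $ k)\<^sup>2) powr (q/2))"
    by (simp add: sq_powr_half)
  also have "\<dots> \<le> real (card T0) powr (1 - q/2) * (\<Sum>k\<in>T0. (x $ k)\<^sup>2) powr (q/2)"
    using fin0 q by (intro sum_powr_le_card_powr_sum) auto
  also have "\<dots> \<le> real s powr (1 - q/2) * (\<Sum>k\<in>T. (x $ k)\<^sup>2) powr (q/2)"
  proof (rule mult_mono)
    show "real (card T0) powr (1 - q/2) \<le> real s powr (1 - q/2)"
      using T(3) q by (intro powr_mono2) auto
    show "(\<Sum>k\<in>T0. (x $ k)\<^sup>2) powr (q/2) \<le> (\<Sum>k\<in>T. (x $ k)\<^sup>2) powr (q/2)"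
      using T(1) fin q by (intro powr_mono2 sum_mono2 sum_nonneg) auto
  qed simp_all
  also have "\<dots> = real s powr (1 - q/2) * l2_norm (vec_restrict T x) powr q"
    using T by (simp add: l2_norm_vec_restrict_powr)
  finally show ?thesis .
qed

lemma scalar_prod_le_l2_norm:
  assumes "dim_vec v = dim_vec w"
  shows "scalar_prod v w \<le> l2_norm v * l2_norm w"
proof -
  have "(scalar_prod v w)\<^sup>2 \<le> (\<Sum>i<dim_vec w. (v $ i)\<^sup>2) * (\<Sum>i<dim_vec w. (w $ i)\<^sup>2)"
    unfolding scalar_prod_def lessThan_atLeast0 by (rule Cauchy_Schwarz_ineq_sum)
  also have "\<dots> = (l2_norm v * l2_norm w)\<^sup>2"
    using assms by (simp add: l2_norm_sq power_mult_distrib)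
  finally show ?thesis
    using l2_norm_nonneg by (metis mult_nonneg_nonneg power2_le_imp_le)
qed

lemma scalar_prod_vec_restrict_self:
  assumes "T \<subseteq> {..<dim_vec x}"
  shows "scalar_prod (vec_restrict T x) x = (l2_norm (vec_restrict T x))\<^sup>2"
proof -
  have "scalar_prod (vec_restrict T x) x = (\<Sum>k<dim_vec x. if k \<in> T then (x $ k)\<^sup>2 else 0)"
    unfolding scalar_prod_def by (auto simp: lessThan_atLeast0 power2_eq_square intro!: sum.cong)
  then show ?thesis using assms by (simp add: sum_restrict_lessThan l2_norm_vec_restrict_sq)
qed

lemma lq_norm_powr:
  assumes "0 < q"
  shows "(lq_norm q v) powr q = (\<Sum>i<dim_vec v. \<bar>v $ i\<bar> powr q)"
  unfolding lq_norm_def using assms by (simp add: powr_powr sum_nonneg)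

lemma lq_norm_nonneg: "0 \<le> lq_norm q v"
  unfolding lq_norm_def by simp

lemma lq_norm_powr_le_sum:
  assumes q: "0 < q" "q \<le> 1" and u: "u \<in> carrier_vec m" and w: "\<And>j. j \<in> J \<Longrightarrow> w j \<in> carrier_vec m"
    and dom: "\<And>i. i < m \<Longrightarrow> \<bar>u $ i\<bar> \<le> (\<Sum>j\<in>J. \<bar>w j $ i\<bar>)"
  shows "lq_norm q u powr q \<le> (\<Sum>j\<in>J. lq_norm q (w j) powr q)"
proof -
  have "lq_norm q u powr q \<le> (\<Sum>i<m. (\<Sum>j\<in>J. \<bar>w j $ i\<bar>) powr q)"
    unfolding lq_norm_powr[OF q(1)] using u dom q by (auto intro!: sum_mono powr_mono2)
  also have "\<dots> \<le> (\<Sum>i<m. \<Sum>j\<in>J. \<bar>w j $ i\<bar> powr q)"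
    using q by (intro sum_mono powr_sum_le_sum_powr) auto
  also have "\<dots> = (\<Sum>j\<in>J. \<Sum>i<m. \<bar>w j $ i\<bar> powr q)"
    by (rule sum.swap)
  also have "\<dots> = (\<Sum>j\<in>J. lq_norm q (w j) powr q)"
    by (intro sum.cong refl) (simp add: lq_norm_powr[OF q(1)] w[THEN carrier_vecD])
  finally show ?thesis .
qed

lemma sum_head_blocks:
  fixes J :: nat
  assumes "finite H" "\<And>j. finite (B j)" "\<And>j. H \<inter> B j = {}" "\<And>i j. i \<noteq> j \<Longrightarrow> B i \<inter> B j = {}"
  shows "(\<Sum>k\<in>H \<union> (\<Union>j<J. B j). g k) = (\<Sum>k\<in>H. g k) + (\<Sum>j<J. \<Sum>k\<in>B j. g k)"
proof -
  have "finite (\<Union>j<J. B j)" using assms(2) by blast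
  then have "(\<Sum>k\<in>H \<union> (\<Union>j<J. B j). g k) = (\<Sum>k\<in>H. g k) + (\<Sum>k\<in>(\<Union>j<J. B j). g k)"
    using assms(1,3) by (intro sum.union_disjoint) auto
  also have "(\<Sum>k\<in>(\<Union>j<J. B j). g k) = (\<Sum>j<J. \<Sum>k\<in>B j. g k)"
    by (rule sum.UNION_disjoint) (use assms in auto)
  finally show ?thesis .
qed

lemma l2_norm_sq_head_blocks:
  fixes J :: nat and B :: "nat \<Rightarrow> nat set"
  assumes x: "x \<in> carrier_vec d" and fin: "finite T" "\<And>j. finite (B j)"
    and disj: "\<And>j. T \<inter> B j = {}" "\<And>i j. i \<noteq> j \<Longrightarrow> B i \<inter> B j = {}"
    and cover: "T \<union> (\<Union>j<J. B j) = {..<d}"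
  shows "(l2_norm x)\<^sup>2 = (l2_norm (vec_restrict T x))\<^sup>2 + (\<Sum>j<J. (l2_norm (vec_restrict (B j) x))\<^sup>2)"
proof -
  have "(l2_norm x)\<^sup>2 = (\<Sum>k\<in>T \<union> (\<Union>j<J. B j). (x $ k)\<^sup>2)"
    using x unfolding cover l2_norm_sq by simp
  also have "\<dots> = (\<Sum>k\<in>T. (x $ k)\<^sup>2) + (\<Sum>j<J. \<Sum>k\<in>B j. (x $ k)\<^sup>2)"
    by (rule sum_head_blocks[OF fin disj])
  also have "\<dots> = (l2_norm (vec_restrict T x))\<^sup>2 + (\<Sum>j<J. (l2_norm (vec_restrict (B j) x))\<^sup>2)"
  proof (intro arg_cong2[where f = "(+)"] sum.cong refl)
    show "(\<Sum>k\<in>T. (x $ k)\<^sup>2) = (l2_norm (vec_restrict T x))\<^sup>2"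
      using cover x by (intro l2_norm_vec_restrict_sq[symmetric]) auto
    show "(\<Sum>k\<in>B j. (x $ k)\<^sup>2) = (l2_norm (vec_restrict (B j) x))\<^sup>2" if "j \<in> {..<J}" for j
      using cover x that by (intro l2_norm_vec_restrict_sq[symmetric]) auto
  qed
  finally show ?thesis .
qed

section \<open>Frames and the canonical dual frame\<close>

lemma frame_gram_det_nonzero:
  assumes D: "D \<in> carrier_mat n d" and frame: "is_frame D L U"
  shows "det (D * D\<^sup>T) \<noteq> 0"
proof
  assume "det (D * D\<^sup>T) = 0"
  then obtain v where v: "v \<in> carrier_vec n" "v \<noteq> 0\<^sub>v n" "(D * D\<^sup>T) *\<^sub>v v = 0\<^sub>v n"
    using det_0_iff_vec_prod_zero[of "D * D\<^sup>T" n] D by auto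
  have "(l2_norm (D\<^sup>T *\<^sub>v v))\<^sup>2 = scalar_prod v (D *\<^sub>v (D\<^sup>T *\<^sub>v v))"
    unfolding l2_norm_sq_scalar_prod using D v by (intro transpose_vec_mult_scalar) auto
  also have "\<dots> = scalar_prod v ((D * D\<^sup>T) *\<^sub>v v)" using D v by simp
  also have "\<dots> = 0" using v by simp
  finally have "L * (l2_norm v)\<^sup>2 \<le> 0"
    using frame v(1) D unfolding is_frame_def by auto
  then have "l2_norm v = 0"
    using frame l2_norm_nonneg[of v] unfolding is_frame_def by (simp add: mult_le_0_iff)
  then show False using v l2_norm_eq_0_imp_zero by blast
qed

lemma frame_dagger:
  assumes D: "D \<in> carrier_mat n d" and frame: "is_frame D L U"
  shows "dagger D \<in> carrier_mat n d" "dagger D * D\<^sup>T = 1\<^sub>m n" "(dagger D)\<^sup>T * (D * D\<^sup>T) = D\<^sup>T"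
proof -
  have G: "D * D\<^sup>T \<in> carrier_mat n n" using D by auto
  have "D * D\<^sup>T \<in> Units (ring_mat TYPE(real) n ())"
    by (rule det_non_zero_imp_unit[OF G frame_gram_det_nonzero[OF D frame]])
  then obtain B where B: "mat_inverse (D * D\<^sup>T) = Some B"
    using mat_inverse(1)[OF G] by fastforce
  then have inv: "D * D\<^sup>T * B = 1\<^sub>m n" "B * (D * D\<^sup>T) = 1\<^sub>m n" "B \<in> carrier_mat n n"
    using mat_inverse(2)[OF G] by auto
  have dagger: "dagger D = B * D" using B unfolding dagger_def by simp
  show "dagger D \<in> carrier_mat n d" using dagger inv D by auto
  show "dagger D * D\<^sup>T = 1\<^sub>m n" using dagger inv D by (simp add: assoc_mult_mat[of B n n D d])
  have G_sym: "(D * D\<^sup>T)\<^sup>T = D * D\<^sup>T"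
    using D transpose_mult[of D n d "D\<^sup>T" n] by simp
  have "(dagger D)\<^sup>T * (D * D\<^sup>T) = (D\<^sup>T * B\<^sup>T) * (D * D\<^sup>T)"
    using dagger transpose_mult[of B n n D d] inv D by simp
  also have "\<dots> = D\<^sup>T * (B\<^sup>T * (D * D\<^sup>T)\<^sup>T)"
    using inv D G_sym by (subst assoc_mult_mat[of _ d n _ n _ n]) auto
  also have "B\<^sup>T * (D * D\<^sup>T)\<^sup>T = (D * D\<^sup>T * B)\<^sup>T"
    using transpose_mult[OF G inv(3)] by simp
  also have "D\<^sup>T * \<dots> = D\<^sup>T" using inv D by simp
  finally show "(dagger D)\<^sup>T * (D * D\<^sup>T) = D\<^sup>T" .
qed

lemma frame_dagger_left_inverse:
  assumes "D \<in> carrier_mat n d" "is_frame D L U" "h \<in> carrier_vec n"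
  shows "dagger D *\<^sub>v (D\<^sup>T *\<^sub>v h) = h"
  using frame_dagger[OF assms(1,2)] assms by (simp flip: assoc_mult_mat_vec)

lemma frame_dagger_scalar_prod:
  assumes D: "D \<in> carrier_mat n d" and frame: "is_frame D L U"
    and v: "v \<in> carrier_vec d" and h: "h \<in> carrier_vec n"
  shows "scalar_prod (D\<^sup>T *\<^sub>v (dagger D *\<^sub>v v)) (D\<^sup>T *\<^sub>v h) = scalar_prod v (D\<^sup>T *\<^sub>v h)"
proof -
  note dag = frame_dagger[OF D frame]
  have Gh: "(D * D\<^sup>T) *\<^sub>v h \<in> carrier_vec n" using D h by auto
  have "scalar_prod (D\<^sup>T *\<^sub>v (dagger D *\<^sub>v v)) (D\<^sup>T *\<^sub>v h)
        = scalar_prod ((D * D\<^sup>T) *\<^sub>v h) (dagger D *\<^sub>v v)"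
    using D h v dag(1) transpose_vec_mult_scalar[of D n d "D\<^sup>T *\<^sub>v h" "dagger D *\<^sub>v v"]
    by (simp add: comm_scalar_prod[of _ n])
  also have "\<dots> = scalar_prod (((dagger D)\<^sup>T * (D * D\<^sup>T)) *\<^sub>v h) v"
    using transpose_vec_mult_scalar[OF dag(1) v Gh] D h dag(1)
      assoc_mult_mat_vec[of "(dagger D)\<^sup>T" d n "D * D\<^sup>T" n h] by simp
  also have "\<dots> = scalar_prod v (D\<^sup>T *\<^sub>v h)"
    using dag(3) D h v by (simp add: comm_scalar_prod[of _ d])
  finally show ?thesis .
qed

lemma frame_dagger_norm_le:
  assumes D: "D \<in> carrier_mat n d" and frame: "is_frame D L U" and w: "w \<in> carrier_vec d"
  shows "L * (l2_norm (dagger D *\<^sub>v w))\<^sup>2 \<le> (l2_norm w)\<^sup>2"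
proof -
  define u where "u = dagger D *\<^sub>v w"
  have u: "u \<in> carrier_vec n" unfolding u_def using frame_dagger(1)[OF D frame] w by auto
  have "(l2_norm (D\<^sup>T *\<^sub>v u))\<^sup>2 = scalar_prod w (D\<^sup>T *\<^sub>v u)"
    unfolding l2_norm_sq_scalar_prod u_def
    using frame_dagger_scalar_prod[OF D frame w u] u_def by simp
  also have "\<dots> \<le> l2_norm w * l2_norm (D\<^sup>T *\<^sub>v u)"
    using D u w by (intro scalar_prod_le_l2_norm) auto
  finally have "l2_norm (D\<^sup>T *\<^sub>v u) \<le> l2_norm w"
    using l2_norm_nonneg[of w] l2_norm_nonneg[of "D\<^sup>T *\<^sub>v u"]
    by (auto simp: power2_eq_square mult_le_cancel_right)
  then have "(l2_norm (D\<^sup>T *\<^sub>v u))\<^sup>2 \<le> (l2_norm w)\<^sup>2"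
    using l2_norm_nonneg by (intro power_mono)
  moreover have "L * (l2_norm u)\<^sup>2 \<le> (l2_norm (D\<^sup>T *\<^sub>v u))\<^sup>2"
    using frame u D unfolding is_frame_def by auto
  ultimately show ?thesis unfolding u_def by linarith
qed

lemma frame_scalar_prod_le:
  assumes D: "D \<in> carrier_mat n d" and frame: "is_frame D L U"
    and v: "v \<in> carrier_vec d" and h: "h \<in> carrier_vec n"
  shows "scalar_prod v (D\<^sup>T *\<^sub>v h) \<le> sqrt U * l2_norm (dagger D *\<^sub>v v) * l2_norm (D\<^sup>T *\<^sub>v h)"
proof -
  have u: "dagger D *\<^sub>v v \<in> carrier_vec n" using frame_dagger(1)[OF D frame] v by auto
  have U: "0 \<le> U" using frame unfolding is_frame_def by simp
  have "(l2_norm (D\<^sup>T *\<^sub>v (dagger D *\<^sub>v v)))\<^sup>2 \<le> (sqrt U * l2_norm (dagger D *\<^sub>v v))\<^sup>2"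
    using frame u D unfolding is_frame_def by (auto simp: power_mult_distrib)
  then have "l2_norm (D\<^sup>T *\<^sub>v (dagger D *\<^sub>v v)) \<le> sqrt U * l2_norm (dagger D *\<^sub>v v)"
    by (rule power2_le_imp_le) (simp add: U l2_norm_nonneg)
  then have "l2_norm (D\<^sup>T *\<^sub>v (dagger D *\<^sub>v v)) * l2_norm (D\<^sup>T *\<^sub>v h)
             \<le> sqrt U * l2_norm (dagger D *\<^sub>v v) * l2_norm (D\<^sup>T *\<^sub>v h)"
    using l2_norm_nonneg by (intro mult_right_mono)
  moreover have "scalar_prod v (D\<^sup>T *\<^sub>v h)
                 \<le> l2_norm (D\<^sup>T *\<^sub>v (dagger D *\<^sub>v v)) * l2_norm (D\<^sup>T *\<^sub>v h)"
    unfolding frame_dagger_scalar_prod[OF D frame v h, symmetric]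
    using D u h by (intro scalar_prod_le_l2_norm) auto
  ultimately show ?thesis by linarith
qed

lemma frame_l2_norm_le:
  assumes D: "D \<in> carrier_mat n d" and frame: "is_frame D L U" and h: "h \<in> carrier_vec n"
  shows "l2_norm h \<le> l2_norm (D\<^sup>T *\<^sub>v h) / sqrt L"
proof -
  have L: "0 < L" using frame unfolding is_frame_def by simp
  have "(sqrt L * l2_norm h)\<^sup>2 \<le> (l2_norm (D\<^sup>T *\<^sub>v h))\<^sup>2"
    using frame D h L unfolding is_frame_def by (simp add: power_mult_distrib)
  then have "sqrt L * l2_norm h \<le> l2_norm (D\<^sup>T *\<^sub>v h)" by (rule power2_le_imp_le) (rule l2_norm_nonneg)
  then show ?thesis using L by (simp add: le_divide_eq mult.commute)
qed

section \<open>Restricted isometry estimates\<close>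

lemma has_rip_rip_const:
  assumes "\<exists>\<delta>. has_rip E q A k \<delta>"
  shows "has_rip E q A k (rip_const E q A k)"
proof -
  define S where "S = {\<delta>. has_rip E q A k \<delta>}"
  define c where "c = Inf S"
  obtain \<delta>0 where \<delta>0: "\<delta>0 \<in> S" using assms unfolding S_def by auto
  have bdd: "bdd_below S" unfolding S_def bdd_below_def has_rip_def by auto
  have c0: "0 \<le> c" unfolding c_def using \<delta>0 by (intro cInf_greatest) (auto simp: S_def has_rip_def)
  have c1: "c < 1" unfolding c_def using cInf_lower[OF \<delta>0 bdd] \<delta>0 by (auto simp: S_def has_rip_def)
  \<comment> \<open>the constraint \<open>(1 - \<delta>) X \<le> Y \<le> (1 + \<delta>) X\<close> says \<open>\<bar>Y - X\<bar> / X \<le> \<delta>\<close>, a lower bound for \<open>S\<close>\<close>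
  have inf_bound: "(1 - c) * X \<le> Y \<and> Y \<le> (1 + c) * X"
    if bounds: "\<And>\<delta>. \<delta> \<in> S \<Longrightarrow> (1 - \<delta>) * X \<le> Y \<and> Y \<le> (1 + \<delta>) * X" and "0 \<le> X" "0 \<le> Y"
    for X Y :: real
  proof (cases "X = 0")
    case True
    then show ?thesis using bounds[OF \<delta>0] that(3) by simp
  next
    case False
    then have "0 < X" using that(2) by simp
    have "\<bar>Y - X\<bar> / X \<le> c"
      unfolding c_def using \<delta>0 bounds \<open>0 < X\<close>
      by (intro cInf_greatest) (auto simp: divide_le_eq abs_le_iff algebra_simps)
    then show ?thesis using \<open>0 < X\<close> by (auto simp: divide_le_eq abs_le_iff algebra_simps)
  qed
  have "\<forall>v\<in>carrier_vec (dim_col E). supp_card v \<le> k \<longrightarrow>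
          (1 - c) * l2_norm (E *\<^sub>v v) powr q \<le> lq_norm q (A *\<^sub>v (E *\<^sub>v v)) powr q \<and>
          lq_norm q (A *\<^sub>v (E *\<^sub>v v)) powr q \<le> (1 + c) * l2_norm (E *\<^sub>v v) powr q"
    by (intro ballI impI inf_bound) (auto simp: S_def has_rip_def)
  then have "has_rip E q A k c" unfolding has_rip_def using c0 c1 by blast
  then show ?thesis unfolding rip_const_def S_def[symmetric] c_def[symmetric] .
qed

lemma has_rip_lower:
  assumes "has_rip E q A k \<delta>" "v \<in> carrier_vec (dim_col E)" "supp_card v \<le> k"
  shows "(1 - \<delta>) * l2_norm (E *\<^sub>v v) powr q \<le> lq_norm q (A *\<^sub>v (E *\<^sub>v v)) powr q"
  using assms unfolding has_rip_def by blast

lemma has_rip_upper: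
  assumes "has_rip E q A k \<delta>" "v \<in> carrier_vec (dim_col E)" "supp_card v \<le> k"
  shows "lq_norm q (A *\<^sub>v (E *\<^sub>v v)) powr q \<le> (1 + \<delta>) * l2_norm (E *\<^sub>v v) powr q"
  using assms unfolding has_rip_def by blast

lemma frame_has_rip_upper:
  assumes D: "D \<in> carrier_mat n d" and frame: "is_frame D L U" and q: "0 < q"
    and rip: "has_rip (dagger D) q A k \<delta>" and v: "v \<in> carrier_vec d" "supp_card v \<le> k"
  shows "lq_norm q (A *\<^sub>v (dagger D *\<^sub>v v)) powr q \<le> (1 + \<delta>) / L powr (q/2) * l2_norm v powr q"
proof -
  have L: "0 < L" using frame unfolding is_frame_def by simp
  have "lq_norm q (A *\<^sub>v (dagger D *\<^sub>v v)) powr q \<le> (1 + \<delta>) * l2_norm (dagger D *\<^sub>v v) powr q"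
    using has_rip_upper[OF rip] frame_dagger(1)[OF D frame] v by auto
  also have "\<dots> \<le> (1 + \<delta>) * (l2_norm v powr q / L powr (q/2))"
  proof (rule mult_left_mono)
    have "((l2_norm (dagger D *\<^sub>v v))\<^sup>2) powr (q/2) \<le> ((l2_norm v)\<^sup>2 / L) powr (q/2)"
      using frame_dagger_norm_le[OF D frame v(1)] L q by (intro powr_mono2) (auto simp: field_simps)
    then show "l2_norm (dagger D *\<^sub>v v) powr q \<le> l2_norm v powr q / L powr (q/2)"
      using L by (simp add: sq_powr_half l2_norm_nonneg powr_divide)
    show "0 \<le> 1 + \<delta>" using rip unfolding has_rip_def by simp
  qed
  finally show ?thesis by simp
qed

lemma rip_kernel_head_le_tail:
  fixes J :: nat and B :: "nat \<Rightarrow> nat set"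
  assumes A: "A \<in> carrier_mat m n" and D: "D \<in> carrier_mat n d" and frame: "is_frame D L U"
    and q: "0 < q" "q \<le> 1"
    and rip_a: "has_rip (dagger D) q A a \<delta>a" and rip_sa: "has_rip (dagger D) q A (s + a) \<delta>sa"
    and x: "x \<in> carrier_vec d" and kernel: "A *\<^sub>v (dagger D *\<^sub>v x) = 0\<^sub>v m"
    and T: "card T \<le> s + a" and B: "\<And>j. card (B j) \<le> a"
    and fin: "finite T" "\<And>j. finite (B j)"
    and disj: "\<And>j. T \<inter> B j = {}" "\<And>i j. i \<noteq> j \<Longrightarrow> B i \<inter> B j = {}"
    and cover: "T \<union> (\<Union>j<J. B j) = {..<d}"
  shows "(1 - \<delta>sa) * l2_norm (dagger D *\<^sub>v vec_restrict T x) powr q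
         \<le> (1 + \<delta>a) / L powr (q/2) * (\<Sum>j<J. l2_norm (vec_restrict (B j) x) powr q)"
proof -
  define M where "M = A * dagger D"
  have dag: "dagger D \<in> carrier_mat n d" using frame_dagger(1)[OF D frame] .
  have M: "M \<in> carrier_mat m d" unfolding M_def using A dag by auto
  have AM: "A *\<^sub>v (dagger D *\<^sub>v v) = M *\<^sub>v v" if "v \<in> carrier_vec d" for v
    unfolding M_def using A dag that by simp
  have sub: "T \<subseteq> {..<d}" "\<And>j. j < J \<Longrightarrow> B j \<subseteq> {..<d}" using cover by auto
  \<comment> \<open>\<open>M x = 0\<close> expresses \<open>M (x|T)\<close> through the tail blocks\<close>
  have rows: "\<bar>(M *\<^sub>v vec_restrict T x) $ i\<bar> \<le> (\<Sum>j<J. \<bar>(M *\<^sub>v vec_restrict (B j) x) $ i\<bar>)"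
    if i: "i < m" for i
  proof -
    have "0 = (M *\<^sub>v x) $ i" using kernel AM[OF x] i by simp
    also have "\<dots> = (\<Sum>k\<in>T \<union> (\<Union>j<J. B j). M $$ (i, k) * x $ k)"
      using M x i unfolding cover by (simp add: scalar_prod_def lessThan_atLeast0)
    also have "\<dots> = (\<Sum>k\<in>T. M $$ (i, k) * x $ k) + (\<Sum>j<J. \<Sum>k\<in>B j. M $$ (i, k) * x $ k)"
      by (rule sum_head_blocks[OF fin disj])
    also have "\<dots> = (M *\<^sub>v vec_restrict T x) $ i + (\<Sum>j<J. (M *\<^sub>v vec_restrict (B j) x) $ i)"
      using mult_mat_vec_restrict[OF M x sub(1) i] mult_mat_vec_restrict[OF M x sub(2) i]
      by (intro arg_cong2[where f = "(+)"] sum.cong) simp_all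
    finally show ?thesis by (simp add: abs_minus sum_abs eq_neg_iff_add_eq_0[symmetric])
  qed
  have "(1 - \<delta>sa) * l2_norm (dagger D *\<^sub>v vec_restrict T x) powr q
        \<le> lq_norm q (M *\<^sub>v vec_restrict T x) powr q"
    using has_rip_lower[OF rip_sa, of "vec_restrict T x"] x dag AM[of "vec_restrict T x"]
      supp_card_vec_restrict[OF fin(1), of x] T by auto
  also have "\<dots> \<le> (\<Sum>j<J. lq_norm q (M *\<^sub>v vec_restrict (B j) x) powr q)"
    using M x by (intro lq_norm_powr_le_sum[OF q _ _ rows]) auto
  also have "\<dots> \<le> (\<Sum>j<J. (1 + \<delta>a) / L powr (q/2) * l2_norm (vec_restrict (B j) x) powr q)"
    using frame_has_rip_upper[OF D frame q(1) rip_a] AM supp_card_vec_restrict[OF fin(2)] B x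
    by (intro sum_mono) (metis order.trans vec_restrict_carrier)
  finally show ?thesis by (simp add: sum_distrib_left)
qed

lemma frame_kernel_energy_bound:
  fixes J :: nat and B :: "nat \<Rightarrow> nat set"
  assumes A: "A \<in> carrier_mat m n" and D: "D \<in> carrier_mat n d" and frame: "is_frame D L U"
    and q: "0 < q" "q \<le> 1"
    and rip_a: "has_rip (dagger D) q A a \<delta>a" and rip_sa: "has_rip (dagger D) q A (s + a) \<delta>sa"
    and h: "h \<in> carrier_vec n" and kernel: "A *\<^sub>v h = 0\<^sub>v m"
    and T: "card T \<le> s + a" and B: "\<And>j. card (B j) \<le> a"
    and fin: "finite T" "\<And>j. finite (B j)"
    and disj: "\<And>j. T \<inter> B j = {}" "\<And>i j. i \<noteq> j \<Longrightarrow> B i \<inter> B j = {}"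
    and cover: "T \<union> (\<Union>j<J. B j) = {..<d}"
  defines "x \<equiv> D\<^sup>T *\<^sub>v h"
  shows "(l2_norm (vec_restrict T x) powr q)\<^sup>2
         \<le> (U / L) powr (q/2) * (1 + \<delta>a) / (1 - \<delta>sa)
           * (\<Sum>j<J. l2_norm (vec_restrict (B j) x) powr q) * l2_norm x powr q"
proof -
  define E W N S where "E = l2_norm (vec_restrict T x)" and "W = l2_norm (dagger D *\<^sub>v vec_restrict T x)"
    and "N = l2_norm x" and "S = (\<Sum>j<J. l2_norm (vec_restrict (B j) x) powr q)"
  have x: "x \<in> carrier_vec d" unfolding x_def using D h by auto
  have LU: "0 < L" "0 < U" using frame unfolding is_frame_def by auto
  have \<delta>: "0 \<le> \<delta>a" "\<delta>sa < 1" using rip_a rip_sa unfolding has_rip_def by auto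
  have nonneg: "0 \<le> E" "0 \<le> W" "0 \<le> N" unfolding E_def W_def N_def by (simp_all add: l2_norm_nonneg)
  have "E\<^sup>2 = scalar_prod (vec_restrict T x) x"
    using cover x unfolding E_def by (intro scalar_prod_vec_restrict_self[symmetric]) auto
  also have "\<dots> \<le> sqrt U * W * N"
    unfolding W_def N_def x_def using D frame h x_def x by (intro frame_scalar_prod_le) auto
  finally have energy: "E\<^sup>2 \<le> sqrt U * W * N" .
  have rip: "(1 - \<delta>sa) * W powr q \<le> (1 + \<delta>a) / L powr (q/2) * S"
    unfolding W_def S_def
  proof (rule rip_kernel_head_le_tail[OF A D frame q rip_a rip_sa x _ T B fin disj cover])
    show "A *\<^sub>v (dagger D *\<^sub>v x) = 0\<^sub>v m"
      unfolding x_def using frame_dagger_left_inverse[OF D frame h] kernel by simp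
  qed
  have "(E powr q)\<^sup>2 = (E\<^sup>2) powr q" using nonneg by (simp add: powr_powr mult.commute flip: powr_numeral)
  also have "\<dots> \<le> (sqrt U * W * N) powr q" using energy q by (intro powr_mono2) auto
  also have "\<dots> = U powr (q/2) * W powr q * N powr q"
    using LU nonneg by (simp add: powr_mult powr_half_sqrt[symmetric] powr_powr)
  also have "\<dots> \<le> U powr (q/2) * ((1 + \<delta>a) / L powr (q/2) * S / (1 - \<delta>sa)) * N powr q"
  proof -
    have "0 < 1 - \<delta>sa" using \<delta> by simp
    then have "W powr q \<le> (1 + \<delta>a) / L powr (q/2) * S / (1 - \<delta>sa)"
      using rip by (simp only: pos_le_divide_eq mult.commute)
    then show ?thesis by (intro mult_right_mono mult_left_mono) simp_all
  qed
  also have "\<dots> = (U / L) powr (q/2) * (1 + \<delta>a) / (1 - \<delta>sa) * S * N powr q"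
    using LU by (simp add: powr_divide)
  finally show ?thesis unfolding E_def S_def N_def .
qed

section \<open>Recovery error of the analysis minimizer\<close>

lemma is_best_s_term_tail:
  assumes best: "is_best_s_term z s fs" and q: "0 < q"
  obtains T0 where "T0 \<subseteq> {..<dim_vec z}" "card T0 \<le> s"
    "(\<Sum>k\<in>{..<dim_vec z} - T0. \<bar>z $ k\<bar> powr q) = lq_norm q (z - fs) powr q"
proof -
  obtain T0 where T0: "T0 \<subseteq> {..<dim_vec z}" "card T0 = min s (dim_vec z)"
    and fs: "dim_vec fs = dim_vec z" "\<And>i. i < dim_vec z \<Longrightarrow> fs $ i = (if i \<in> T0 then z $ i else 0)"
    using best unfolding is_best_s_term_def by blast
  have "lq_norm q (z - fs) powr q = (\<Sum>k<dim_vec z. if k \<in> T0 then 0 else \<bar>z $ k\<bar> powr q)"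
    unfolding lq_norm_powr[OF q] using fs by (intro sum.cong) auto
  also have "\<dots> = (\<Sum>k\<in>{..<dim_vec z} - T0. \<bar>z $ k\<bar> powr q)"
    by (simp add: sum.If_cases Diff_eq)
  finally show thesis using that T0 by simp
qed

lemma is_lq_minimizer_error:
  assumes A: "A \<in> carrier_mat m n" and D: "D \<in> carrier_mat n d" and f: "f \<in> carrier_vec n"
    and minimizer: "is_lq_minimizer q A D (A *\<^sub>v f) fhat"
  shows "fhat - f \<in> carrier_vec n" "A *\<^sub>v (fhat - f) = 0\<^sub>v m"
    "lq_norm q (D\<^sup>T *\<^sub>v f + D\<^sup>T *\<^sub>v (fhat - f)) \<le> lq_norm q (D\<^sup>T *\<^sub>v f)"
proof -
  have fhat: "fhat \<in> carrier_vec n" and "A *\<^sub>v fhat = A *\<^sub>v f"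
    and min: "lq_norm q (D\<^sup>T *\<^sub>v fhat) \<le> lq_norm q (D\<^sup>T *\<^sub>v f)"
    using minimizer f A unfolding is_lq_minimizer_def by auto
  then show "fhat - f \<in> carrier_vec n" "A *\<^sub>v (fhat - f) = 0\<^sub>v m"
    using A f by (auto simp: mult_minus_distrib_mat_vec)
  have "D\<^sup>T *\<^sub>v f + D\<^sup>T *\<^sub>v (fhat - f) = D\<^sup>T *\<^sub>v fhat"
    using D f fhat by (simp add: mult_minus_distrib_mat_vec) (intro eq_vecI; simp)
  then show "lq_norm q (D\<^sup>T *\<^sub>v f + D\<^sup>T *\<^sub>v (fhat - f)) \<le> lq_norm q (D\<^sup>T *\<^sub>v f)"
    using min by simp
qed

lemma lq_cone_head_tail_decomposition:
  fixes x z :: "real vec" and T0 :: "nat set"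
  assumes x: "x \<in> carrier_vec d" and z: "z \<in> carrier_vec d"
    and T0: "T0 \<subseteq> {..<d}" "card T0 \<le> s" and a: "0 < a" and q: "0 < q" "q \<le> 1"
    and min: "lq_norm q (z + x) \<le> lq_norm q z"
  obtains T :: "nat set" and J :: nat and B :: "nat \<Rightarrow> nat set"
  where "card T \<le> s + a" "\<And>j. card (B j) \<le> a" "finite T" "\<And>j. finite (B j)"
    "\<And>j. T \<inter> B j = {}" "\<And>i j. i \<noteq> j \<Longrightarrow> B i \<inter> B j = {}" "T \<union> (\<Union>j<J. B j) = {..<d}"
    "(\<Sum>j<J. l2_norm (vec_restrict (B j) x) powr q)
     \<le> real a powr (q/2 - 1) * (real s powr (1 - q/2) * l2_norm (vec_restrict T x) powr q
          + 2 * (\<Sum>k\<in>{..<d} - T0. \<bar>z $ k\<bar> powr q))"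
proof -
  define C where "C = {..<d} - T0"
  obtain H :: "nat set" and J :: nat and B :: "nat \<Rightarrow> nat set"
    where H: "H \<subseteq> C" "card H \<le> a" and B: "\<And>j. B j \<subseteq> C" "\<And>j. card (B j) \<le> a"
    and disj: "\<And>j. H \<inter> B j = {}" "\<And>i j. i \<noteq> j \<Longrightarrow> B i \<inter> B j = {}"
    and cover: "H \<union> (\<Union>j<J. B j) = C"
    and tail: "(\<Sum>j<J. (\<Sum>k\<in>B j. (x $ k)\<^sup>2) powr (q/2))
               \<le> real a powr (q/2 - 1) * (\<Sum>k\<in>C. \<bar>x $ k\<bar> powr q)"
    by (rule decreasing_block_partition[of C a q "\<lambda>k. x $ k"]) (use a q in \<open>auto simp: C_def\<close>)
  define T where "T = T0 \<union> H"
  have fin_C: "finite C" unfolding C_def by simp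
  have fin: "finite T0" "finite C" "finite T" "\<And>j. finite (B j)"
    using finite_subset[OF T0(1)] finite_subset[OF H(1) fin_C] finite_subset[OF B(1) fin_C] fin_C
    unfolding T_def by auto
  have T_sub: "T \<subseteq> {..<d}" using T0 H unfolding T_def C_def by auto
  have cone: "(\<Sum>k\<in>C. \<bar>x $ k\<bar> powr q) \<le> (\<Sum>k\<in>T0. \<bar>x $ k\<bar> powr q) + 2 * (\<Sum>k\<in>C. \<bar>z $ k\<bar> powr q)"
  proof (rule sum_powr_cone_constraint[OF fin(1,2) _ q])
    have "T0 \<union> C = {..<d}" using T0 unfolding C_def by auto
    moreover have "lq_norm q (z + x) powr q \<le> lq_norm q z powr q"
      using min q lq_norm_nonneg by (intro powr_mono2) auto
    ultimately show "(\<Sum>k\<in>T0 \<union> C. \<bar>z $ k + x $ k\<bar> powr q) \<le> (\<Sum>k\<in>T0 \<union> C. \<bar>z $ k\<bar> powr q)"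
      using x z by (simp add: lq_norm_powr[OF q(1)])
  qed (auto simp: C_def)
  have head: "(\<Sum>k\<in>T0. \<bar>x $ k\<bar> powr q) \<le> real s powr (1 - q/2) * l2_norm (vec_restrict T x) powr q"
    using T_sub x T0 q unfolding T_def by (intro sum_abs_powr_le_l2_norm_vec_restrict) auto
  show thesis
  proof
    show "finite T" "\<And>j. finite (B j)" "\<And>j. card (B j) \<le> a" using fin(3,4) B(2) .
    show "card T \<le> s + a" unfolding T_def using card_Un_le[of T0 H] T0 H by linarith
    show "T \<inter> B j = {}" for j using disj(1)[of j] B(1)[of j] unfolding T_def C_def by auto
    show "B i \<inter> B j = {}" if "i \<noteq> j" for i j using disj(2)[OF that] .
    show "T \<union> (\<Union>j<J. B j) = {..<d}" using cover T0(1) unfolding T_def C_def by auto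
    have "(\<Sum>j<J. l2_norm (vec_restrict (B j) x) powr q) = (\<Sum>j<J. (\<Sum>k\<in>B j. (x $ k)\<^sup>2) powr (q/2))"
      by (intro sum.cong refl l2_norm_vec_restrict_powr) (use B(1) x in \<open>auto simp: C_def\<close>)
    also have "\<dots> \<le> real a powr (q/2 - 1) * (\<Sum>k\<in>C. \<bar>x $ k\<bar> powr q)" by (rule tail)
    also have "\<dots> \<le> real a powr (q/2 - 1) * (real s powr (1 - q/2) * l2_norm (vec_restrict T x) powr q
                      + 2 * (\<Sum>k\<in>C. \<bar>z $ k\<bar> powr q))"
      using cone head by (intro mult_left_mono) auto
    finally show "(\<Sum>j<J. l2_norm (vec_restrict (B j) x) powr q)
      \<le> real a powr (q/2 - 1) * (real s powr (1 - q/2) * l2_norm (vec_restrict T x) powr q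
          + 2 * (\<Sum>k\<in>{..<d} - T0. \<bar>z $ k\<bar> powr q))" by (simp only: C_def)
  qed
qed

lemma lq_minimizer_analysis_error:
  assumes A: "A \<in> carrier_mat m n" and D: "D \<in> carrier_mat n d" and frame: "is_frame D L U"
    and q: "0 < q" "q \<le> 1" and s: "s < a"
    and rip_a: "has_rip (dagger D) q A a \<delta>a" and rip_sa: "has_rip (dagger D) q A (s + a) \<delta>sa"
    and f: "f \<in> carrier_vec n" and minimizer: "is_lq_minimizer q A D (A *\<^sub>v f) fhat"
    and best: "is_best_s_term (D\<^sup>T *\<^sub>v f) s fs"
    and gain: "\<theta> * \<rho> * (1 + \<rho> powr (2/q)) powr (q/2) < 1"
    and \<theta>_def: "\<theta> = (U / L) powr (q/2) * (1 + \<delta>a) / (1 - \<delta>sa)"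
    and \<rho>_def: "\<rho> = (real s / real a) powr (1 - q/2)"
  shows "l2_norm (D\<^sup>T *\<^sub>v (fhat - f)) powr q
         \<le> recovery_factor (2/q) \<theta> \<rho> * (2 * real a powr (q/2 - 1) * lq_norm q (D\<^sup>T *\<^sub>v f - fs) powr q)"
proof -
  define h x z where "h = fhat - f" and "x = D\<^sup>T *\<^sub>v h" and "z = D\<^sup>T *\<^sub>v f"
  define \<tau> where "\<tau> = 2 * real a powr (q/2 - 1) * lq_norm q (z - fs) powr q"
  note error = is_lq_minimizer_error[OF A D f minimizer, folded h_def, folded x_def z_def]
  have x: "x \<in> carrier_vec d" and z: "z \<in> carrier_vec d" unfolding x_def z_def using D error f by auto
  then have dz: "dim_vec z = d" by simp
  obtain T0 where T0: "T0 \<subseteq> {..<d}" "card T0 \<le> s"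
    and tail_z: "(\<Sum>k\<in>{..<d} - T0. \<bar>z $ k\<bar> powr q) = lq_norm q (z - fs) powr q"
    by (rule is_best_s_term_tail[OF best[folded z_def] q(1), unfolded dz])
  obtain T J and B :: "nat \<Rightarrow> nat set"
    where T_card: "card T \<le> s + a" and B_card: "\<And>j. card (B j) \<le> a"
      and fin: "finite T" "\<And>j. finite (B j)"
      and disj: "\<And>j. T \<inter> B j = {}" "\<And>i j. i \<noteq> j \<Longrightarrow> B i \<inter> B j = {}"
      and cover: "T \<union> (\<Union>j<J. B j) = {..<d}"
      and tail: "(\<Sum>j<J. l2_norm (vec_restrict (B j) x) powr q)
                 \<le> real a powr (q/2 - 1) * (real s powr (1 - q/2) * l2_norm (vec_restrict T x) powr q
                    + 2 * (\<Sum>k\<in>{..<d} - T0. \<bar>z $ k\<bar> powr q))"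
    by (rule lq_cone_head_tail_decomposition[where s = s and a = a, OF x z T0 _ q error(3)])
      (use s in auto)
  define e S r nn where "e = l2_norm (vec_restrict T x) powr q"
    and "S = (\<Sum>j<J. l2_norm (vec_restrict (B j) x) powr q)"
    and "r = (\<Sum>j<J. (l2_norm (vec_restrict (B j) x))\<^sup>2) powr (q/2)" and "nn = l2_norm x powr q"
  have "real a powr (q/2 - 1) * real s powr (1 - q/2) = \<rho>"
    unfolding \<rho>_def using s by (intro powr_diff_mult_powr_diff) auto
  with tail_z have S_le: "S \<le> \<rho> * e + \<tau>"
    using tail unfolding S_def e_def \<tau>_def by (simp add: algebra_simps)
  have energy: "e\<^sup>2 \<le> \<theta> * (\<rho> * e + \<tau>) * nn"
  proof -
    have "e\<^sup>2 \<le> \<theta> * S * nn"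
      using frame_kernel_energy_bound[OF A D frame q rip_a rip_sa error(1,2) T_card B_card fin disj cover]
      unfolding e_def S_def nn_def \<theta>_def x_def by simp
    also have "\<dots> \<le> \<theta> * (\<rho> * e + \<tau>) * nn"
      using S_le frame rip_a rip_sa unfolding \<theta>_def nn_def is_frame_def has_rip_def
      by (intro mult_right_mono mult_left_mono) auto
    finally show ?thesis .
  qed
  have r_le: "r \<le> \<rho> * e + \<tau>"
  proof -
    have "r \<le> (\<Sum>j<J. ((l2_norm (vec_restrict (B j) x))\<^sup>2) powr (q/2))"
      unfolding r_def using q by (intro powr_sum_le_sum_powr) auto
    also have "\<dots> = S" unfolding S_def by (simp add: sq_powr_half l2_norm_nonneg)
    finally show ?thesis using S_le by simp
  qed
  have split: "nn powr (2/q) \<le> e powr (2/q) + r powr (2/q)"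
    using l2_norm_sq_head_blocks[OF x fin disj cover] q l2_norm_nonneg
    unfolding nn_def e_def r_def by (simp add: powr_powr_two_div sum_nonneg powr_powr)
  have "nn \<le> recovery_factor (2/q) \<theta> \<rho> * \<tau>"
  proof (rule scalar_recovery_bound[OF _ _ _ _ _ _ _ _ energy r_le split])
    show "1 \<le> 2/q" "0 \<le> \<rho>" "0 \<le> e" "0 \<le> r" "0 \<le> nn" "0 \<le> \<tau>"
      using q by (simp_all add: \<rho>_def e_def r_def nn_def \<tau>_def)
    show "0 \<le> \<theta>" using frame rip_a rip_sa unfolding \<theta>_def is_frame_def has_rip_def by auto
    show "\<theta> * \<rho> * (1 + \<rho> powr (2/q)) powr (1 / (2/q)) < 1" using gain by simp
  qed
  then show ?thesis unfolding nn_def \<tau>_def x_def h_def z_def .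
qed

definition recovery_constant :: "real \<Rightarrow> real \<Rightarrow> real \<Rightarrow> real \<Rightarrow> real \<Rightarrow> real \<Rightarrow> real" where
  "recovery_constant \<delta>a \<delta>sa \<rho> q L \<kappa> =
     (2 * recovery_factor (2/q) (\<kappa> powr (q/2) * (1 + \<delta>a) / (1 - \<delta>sa)) (\<rho> powr (1 - q/2))) powr (1/q)
     * \<rho> powr (1/q - 1/2) / sqrt L"

lemma lq_minimizer_error_bound:
  assumes A: "A \<in> carrier_mat m n" and D: "D \<in> carrier_mat n d" and frame: "is_frame D L U"
    and q: "0 < q" "q \<le> 1" and s: "0 < s" "s < a"
    and rip_a: "has_rip (dagger D) q A a \<delta>a" and rip_sa: "has_rip (dagger D) q A (s + a) \<delta>sa"
    and cond: "(real s / real a) powr (1 - q/2) * ((real s / real a) powr (2/q - 1) + 1) powr (q/2)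
                 * (U / L) powr q * (1 + \<delta>a) < 1 - \<delta>sa"
    and f: "f \<in> carrier_vec n" and minimizer: "is_lq_minimizer q A D (A *\<^sub>v f) fhat"
    and best: "is_best_s_term (D\<^sup>T *\<^sub>v f) s fs"
  shows "l2_norm (fhat - f)
         \<le> recovery_constant \<delta>a \<delta>sa (real s / real a) q L (U / L) * lq_norm q (D\<^sup>T *\<^sub>v f - fs)
            / real s powr (1/q - 1/2)"
proof -
  define \<rho> \<theta> \<rho>' where "\<rho> = real s / real a" and "\<theta> = (U / L) powr (q/2) * (1 + \<delta>a) / (1 - \<delta>sa)"
    and "\<rho>' = \<rho> powr (1 - q/2)"
  define F \<sigma> N where "F = recovery_factor (2/q) \<theta> \<rho>'" and "\<sigma> = lq_norm q (D\<^sup>T *\<^sub>v f - fs)"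
    and "N = l2_norm (D\<^sup>T *\<^sub>v (fhat - f))"
  have LU: "0 < L" "L \<le> U" using frame unfolding is_frame_def by auto
  have \<delta>: "0 \<le> \<delta>a" "\<delta>sa < 1" using rip_a rip_sa unfolding has_rip_def by auto
  have \<rho>: "0 < \<rho>" unfolding \<rho>_def using s by simp
  have gain: "\<theta> * \<rho>' * (1 + \<rho>' powr (2/q)) powr (q/2) < 1"
    unfolding \<theta>_def \<rho>'_def using recovery_gain_lt_one[OF q(1) _ _ \<delta> cond] \<rho> LU by (simp add: \<rho>_def)
  have F: "1 \<le> F" unfolding F_def
    using \<delta> LU gain by (intro recovery_factor_ge_one) (auto simp: \<theta>_def \<rho>'_def)
  have nonneg: "0 \<le> N" "0 \<le> \<sigma>" unfolding N_def \<sigma>_def by (simp_all add: l2_norm_nonneg lq_norm_nonneg)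
  have "N powr q \<le> F * (2 * real a powr (q/2 - 1) * \<sigma> powr q)"
    unfolding N_def F_def \<sigma>_def
    using lq_minimizer_analysis_error[OF A D frame q s(2) rip_a rip_sa f minimizer best gain \<theta>_def]
    unfolding \<rho>'_def \<rho>_def by simp
  then have "(N powr q) powr (1/q) \<le> (F * (2 * real a powr (q/2 - 1) * \<sigma> powr q)) powr (1/q)"
    using q by (intro powr_mono2) auto
  also have "\<dots> = (2 * F) powr (1/q) * (real a powr (q/2 - 1)) powr (1/q) * (\<sigma> powr q) powr (1/q)"
    using F by (simp add: powr_mult mult_ac)
  also have "\<dots> = (2 * F) powr (1/q) * real a powr (1/2 - 1/q) * \<sigma>"
    using q nonneg by (simp add: powr_powr field_simps)
  also have "real a powr (1/2 - 1/q) = \<rho> powr (1/q - 1/2) / real s powr (1/q - 1/2)"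
    using powr_diff_mult_powr_diff[of "real a" "real s" "1/2" "1/q"] s unfolding \<rho>_def
    by (simp add: eq_divide_eq)
  finally have N_le: "N \<le> (2 * F) powr (1/q) * \<rho> powr (1/q - 1/2) * \<sigma> / real s powr (1/q - 1/2)"
    using nonneg q by (simp add: powr_powr)
  have "l2_norm (fhat - f) \<le> N / sqrt L"
    unfolding N_def using D frame is_lq_minimizer_error(1)[OF A D f minimizer]
    by (rule frame_l2_norm_le)
  also have "\<dots> \<le> recovery_constant \<delta>a \<delta>sa \<rho> q L (U / L) * \<sigma> / real s powr (1/q - 1/2)"
    using N_le LU unfolding recovery_constant_def F_def \<theta>_def \<rho>'_def
    by (simp add: divide_right_mono field_simps)
  finally show ?thesis unfolding \<rho>_def \<sigma>_def .
qed

theorem corollary2p2: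
  shows "\<exists>C1 :: real \<Rightarrow> real \<Rightarrow> real \<Rightarrow> real \<Rightarrow> real \<Rightarrow> real \<Rightarrow> real.
    (\<forall>x1 x2 x3 x4 x5 x6. 0 < C1 x1 x2 x3 x4 x5 x6) \<and>
    (\<forall>(m::nat) (n::nat) (d::nat) (A::real mat) (D::real mat) (L::real) (U::real)
        (q::real) (s::nat) (a::nat) (f::real vec) (fhat::real vec) (fs::real vec).
      A \<in> carrier_mat m n \<longrightarrow> D \<in> carrier_mat n d \<longrightarrow>
      is_frame D L U \<longrightarrow>
      0 < q \<longrightarrow> q \<le> 1 \<longrightarrow> 0 < s \<longrightarrow> s < a \<longrightarrow>
      (\<exists>\<delta>. has_rip (dagger D) q A a \<delta>) \<longrightarrow>
      (\<exists>\<delta>. has_rip (dagger D) q A (s + a) \<delta>) \<longrightarrow>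
      (let \<rho> = real s / real a; \<kappa> = U / L;
           \<delta>a = rip_const (dagger D) q A a; \<delta>sa = rip_const (dagger D) q A (s + a)
       in \<rho> powr (1 - q / 2) * (\<rho> powr (2 / q - 1) + 1) powr (q / 2) * \<kappa> powr q * (1 + \<delta>a)
            < 1 - \<delta>sa \<longrightarrow>
          f \<in> carrier_vec n \<longrightarrow>
          is_lq_minimizer q A D (A *\<^sub>v f) fhat \<longrightarrow>
          is_best_s_term (D\<^sup>T *\<^sub>v f) s fs \<longrightarrow>
          l2_norm (fhat - f) \<le> C1 \<delta>a \<delta>sa \<rho> q L \<kappa> *
            lq_norm q (D\<^sup>T *\<^sub>v f - fs) / real s powr (1 / q - 1 / 2)))"
proof -
  \<comment> \<open>positivity is required for all arguments, also those where \<open>recovery_constant\<close> is meaningless\<close>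
  define C1 where "C1 \<delta>a \<delta>sa \<rho> q L \<kappa> = max 1 (recovery_constant \<delta>a \<delta>sa \<rho> q L \<kappa>)"
    for \<delta>a \<delta>sa \<rho> q L \<kappa> :: real
  have bound: "l2_norm (fhat - f) \<le> C1 \<delta>a \<delta>sa (real s / real a) q L (U / L) *
          lq_norm q (D\<^sup>T *\<^sub>v f - fs) / real s powr (1 / q - 1 / 2)"
    if "A \<in> carrier_mat m n" "D \<in> carrier_mat n d" "is_frame D L U" "0 < q" "q \<le> 1" "0 < s" "s < a"
      "has_rip (dagger D) q A a \<delta>a" "has_rip (dagger D) q A (s + a) \<delta>sa"
      "(real s / real a) powr (1 - q / 2) * ((real s / real a) powr (2 / q - 1) + 1) powr (q / 2)
         * (U / L) powr q * (1 + \<delta>a) < 1 - \<delta>sa"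
      "f \<in> carrier_vec n" "is_lq_minimizer q A D (A *\<^sub>v f) fhat" "is_best_s_term (D\<^sup>T *\<^sub>v f) s fs"
    for m n d A D L U q s a f fhat fs \<delta>a \<delta>sa
  proof -
    have "l2_norm (fhat - f) \<le> recovery_constant \<delta>a \<delta>sa (real s / real a) q L (U / L)
            * lq_norm q (D\<^sup>T *\<^sub>v f - fs) / real s powr (1 / q - 1 / 2)"
      by (rule lq_minimizer_error_bound[OF that])
    also have "\<dots> \<le> C1 \<delta>a \<delta>sa (real s / real a) q L (U / L)
            * lq_norm q (D\<^sup>T *\<^sub>v f - fs) / real s powr (1 / q - 1 / 2)"
      unfolding C1_def by (intro divide_right_mono mult_right_mono) (simp_all add: lq_norm_nonneg)
    finally show ?thesis .
  qed
  show ?thesis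
    unfolding Let_def
  proof (intro exI[of _ C1] conjI allI impI)
    show "0 < C1 x1 x2 x3 x4 x5 x6" for x1 x2 x3 x4 x5 x6 unfolding C1_def by simp
  qed (rule bound; (assumption | rule has_rip_rip_const, assumption))
qed

end
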